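(* Let $(M,s)$ be a finite pointed epistemic model, $M=(S,R,V)$, and let $\phi$ be a satisfiable formula of $\mathcal{L}$. Suppose that all agents occurring in $\phi$ have non-trivial beliefs in state $s$ of $M$, in the sense that there is a set $S^{ser}\subseteq S$ with $s\in S^{ser}$ such that for each agent $a$ occurring in $\phi$ and each $t\in S^{ser}$ there is $u\in S^{ser}$ with $(t,u)\in R(a)$. Then there is an update $(\mathsf{U},\mathsf{e})$ such that $(M,s)\models\langle\mathsf{U},\mathsf{e}\rangle\phi$.
   Context: Fix a finite set of agents $A$ and countable set of atoms $P$. An epistemic model is $M=(S,R,V)$ with $S$ nonempty, $R:A\to\wp(S\times S)$, $V:P\to\wp(S)$. The language $\mathcal{L}$: $\phi ::= p \mid \neg\phi\mid\phi\wedge\phi\mid[\alpha]\phi$, $\alpha ::= a\mid B^*\mid(\mathsf{U},\mathsf{e})$ ($a\in A$, $B\subseteq A$), with $\langle\alpha\rangle\phi:=\neg[\alpha]\neg\phi$. An update model $\mathsf{U}=(\mathsf{E},\mathsf{R},\mathsf{pre},\mathsf{post})$ has finite nonempty event set $\mathsf{E}$, $\mathsf{R}:A\to\wp(\mathsf{E}\times\mathsf{E})$, $\mathsf{pre}:\mathsf{E}\to\mathcal{L}$ and $\mathsf{post}:\mathsf{E}\to(P\to\mathcal{L})$ with each $\mathsf{post}(\mathsf{e})$ differing from the identity on finitely many atoms; an update is $(\mathsf{U},\mathsf{e})$ with $\mathsf{e}\in\mathsf{E}$. Semantics: atoms via $V$, Booleans as usual, $[a]\phi$ true at $s$ iff $\phi$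 true at all $R(a)$-successors, $[B^*]\phi$ true iff $\phi$ true at all states reachable by the reflexive transitive closure of $\bigcup_{a\in B}R(a)$, and $(M,s)\models[\mathsf{U},\mathsf{e}]\phi$ iff $(M,s)\models\mathsf{pre}(\mathsf{e})$ implies $(M\otimes\mathsf{U},(s,\mathsf{e}))\models\phi$, where $M\otimes\mathsf{U}$ has domain $\{(t,\mathsf{f}) : (M,t)\models\mathsf{pre}(\mathsf{f})\}$, $((t,\mathsf{f}),(u,\mathsf{g}))$ related for $a$ iff $(t,u)\in R(a)$ and $(\mathsf{f},\mathsf{g})\in\mathsf{R}(a)$, and $(t,\mathsf{f})\in V^\otimes(p)$ iff $(M,t)\models\mathsf{post}(\mathsf{f})(p)$. A formula is satisfiable if it is true in some pointed epistemic model. *)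

theory Defs
  imports Main "HOL-Library.Countable"
begin

text \<open>Update models are inlined into the action
  constructor Upd: event set E (events are natural numbers), accessibility
  relations Rl, preconditions pre and postconditions post, plus the designated
  event. Well-formedness (finite nonempty E, designated event in E, etc.) is
  imposed by the predicate wf_fm / wf_act below.\<close>

datatype ('a, 'p) fm =
    Atom 'p
  | Neg "('a, 'p) fm"
  | Conj "('a, 'p) fm" "('a, 'p) fm"
  | Box "('a, 'p) act" "('a, 'p) fm"
and ('a, 'p) act =
    Ag 'a
  | Star "'a set"
  | Upd "nat set" "'a \<Rightarrow> (nat \<times> nat) set" "nat \<Rightarrow> ('a, 'p) fm"
        "nat \<Rightarrow> 'p \<Rightarrow> ('a, 'p) fm" nat

definition Dia :: "('a, 'p) act \<Rightarrow> ('a, 'p) fm \<Rightarrow> ('a, 'p) fm" where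
  "Dia \<alpha> \<phi> = Neg (Box \<alpha> (Neg \<phi>))"

primrec wf_fm :: "('a, 'p) fm \<Rightarrow> bool"
  and wf_act :: "('a, 'p) act \<Rightarrow> bool" where
  "wf_fm (Atom p) = True"
| "wf_fm (Neg \<phi>) = wf_fm \<phi>"
| "wf_fm (Conj \<phi> \<psi>) = (wf_fm \<phi> \<and> wf_fm \<psi>)"
| "wf_fm (Box \<alpha> \<phi>) = (wf_act \<alpha> \<and> wf_fm \<phi>)"
| "wf_act (Ag a) = True"
| "wf_act (Star B) = True"
| "wf_act (Upd E Rl pre post e) =
     (finite E \<and> E \<noteq> {} \<and> e \<in> E \<and> (\<forall>a. Rl a \<subseteq> E \<times> E) \<and>
      (\<forall>f\<in>E. wf_fm (pre f) \<and> finite {p. post f p \<noteq> Atom p} \<and>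
              (\<forall>p. wf_fm (post f p))))"

primrec agents_fm :: "('a, 'p) fm \<Rightarrow> 'a set"
  and agents_act :: "('a, 'p) act \<Rightarrow> 'a set" where
  "agents_fm (Atom p) = {}"
| "agents_fm (Neg \<phi>) = agents_fm \<phi>"
| "agents_fm (Conj \<phi> \<psi>) = agents_fm \<phi> \<union> agents_fm \<psi>"
| "agents_fm (Box \<alpha> \<phi>) = agents_act \<alpha> \<union> agents_fm \<phi>"
| "agents_act (Ag a) = {a}"
| "agents_act (Star B) = B"
| "agents_act (Upd E Rl pre post e) =
     (\<Union>f\<in>E. agents_fm (pre f) \<union> (\<Union>p. agents_fm (post f p)))"

record ('w, 'a, 'p) emodel =
  dom :: "'w set"
  rel :: "'a \<Rightarrow> ('w \<times> 'w) set"
  val :: "'p \<Rightarrow> 'w set"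

definition is_model :: "('w, 'a, 'p) emodel \<Rightarrow> bool" where
  "is_model M \<longleftrightarrow> dom M \<noteq> {} \<and> (\<forall>a. rel M a \<subseteq> dom M \<times> dom M)"

text \<open>To avoid a change of state type at each product update, semantics is
  evaluated on models whose states have the form (x, l) with l a list of
  events; the product state ((x,l), f) is represented as (x, l @ [f]).
  This is an isomorphic copy of the product update.\<close>

definition upd ::
  "('s \<times> nat list, 'a, 'p) emodel \<Rightarrow> nat set \<Rightarrow> ('a \<Rightarrow> (nat \<times> nat) set)
   \<Rightarrow> (nat \<Rightarrow> ('s \<times> nat list, 'a, 'p) emodel \<Rightarrow> 's \<times> nat list \<Rightarrow> bool)
   \<Rightarrow> (nat \<Rightarrow> 'p \<Rightarrow> ('s \<times> nat list, 'a, 'p) emodel \<Rightarrow> 's \<times> nat list \<Rightarrow> bool)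
   \<Rightarrow> ('s \<times> nat list, 'a, 'p) emodel" where
  "upd M E Rl P Q =
     (let D = {(x, l @ [f]) | x l f. (x, l) \<in> dom M \<and> f \<in> E \<and> P f M (x, l)} in
      \<lparr> dom = D,
        rel = (\<lambda>a. {((x, l @ [f]), (y, m @ [g])) | x l f y m g.
                     (x, l @ [f]) \<in> D \<and> (y, m @ [g]) \<in> D \<and>
                     ((x, l), (y, m)) \<in> rel M a \<and> (f, g) \<in> Rl a}),
        val = (\<lambda>p. {(x, l @ [f]) | x l f. (x, l @ [f]) \<in> D \<and> Q f p M (x, l)}) \<rparr>)"

primrec sat :: "('a, 'p) fm \<Rightarrow> ('s \<times> nat list, 'a, 'p) emodel \<Rightarrow> 's \<times> nat list \<Rightarrow> bool"
  and sat_box :: "('a, 'p) act \<Rightarrow> (('s \<times> nat list, 'a, 'p) emodel \<Rightarrow> 's \<times> nat list \<Rightarrow> bool)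
                   \<Rightarrow> ('s \<times> nat list, 'a, 'p) emodel \<Rightarrow> 's \<times> nat list \<Rightarrow> bool" where
  "sat (Atom p) = (\<lambda>M w. w \<in> val M p)"
| "sat (Neg \<phi>) = (\<lambda>M w. \<not> sat \<phi> M w)"
| "sat (Conj \<phi> \<psi>) = (\<lambda>M w. sat \<phi> M w \<and> sat \<psi> M w)"
| "sat (Box \<alpha> \<phi>) = sat_box \<alpha> (sat \<phi>)"
| "sat_box (Ag a) = (\<lambda>k M w. \<forall>v. (w, v) \<in> rel M a \<longrightarrow> k M v)"
| "sat_box (Star B) = (\<lambda>k M w. \<forall>v. (w, v) \<in> (\<Union>a\<in>B. rel M a)\<^sup>* \<longrightarrow> k M v)"
| "sat_box (Upd E Rl pre post e) =
     (\<lambda>k M w. sat (pre e) M w \<longrightarrow>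
        k (upd M E Rl (\<lambda>f. sat (pre f)) (\<lambda>f p. sat (post f p)))
          (fst w, snd w @ [e]))"

definition lift :: "('s, 'a, 'p) emodel \<Rightarrow> ('s \<times> nat list, 'a, 'p) emodel" where
  "lift M = \<lparr> dom = {(x, []) | x. x \<in> dom M},
              rel = (\<lambda>a. {((x, []), (y, [])) | x y. (x, y) \<in> rel M a}),
              val = (\<lambda>p. {(x, []) | x. x \<in> val M p}) \<rparr>"

definition holds :: "('s, 'a, 'p) emodel \<Rightarrow> 's \<Rightarrow> ('a, 'p) fm \<Rightarrow> bool" where
  "holds M s \<phi> = sat \<phi> (lift M) (s, [])"

end

(* A satisfiable phi has, by filtration through a Fischer-Ladner style closure, a finite model F
   with phi true at a state z. Since M is finite, the states from which every agent of phi can move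
   on forever form a set defined by a single formula chi: the extensions of the nested diamond
   formulas of depth k decrease with k and must stabilise, and the stable set is serial and contains
   every serial set, in particular one containing s. Now take as events the states of F, with the
   accessibility relations of F, precondition chi everywhere, and postconditions resetting the atoms
   of phi to their values in F. Seriality on the chi-states supplies the back condition of a bounded
   morphism from the product of M with this update onto F that sends (x, f) to f; bounded morphisms
   preserve phi, so <U, e>phi holds at s for the event e that stands for z. *)
theory Submission
  imports Defs
begin

section \<open>Product update\<close>

abbreviation update ::
  "('s \<times> nat list, 'a, 'p) emodel \<Rightarrow> nat set \<Rightarrow> ('a \<Rightarrow> (nat \<times> nat) set)
   \<Rightarrow> (nat \<Rightarrow> ('a, 'p) fm) \<Rightarrow> (nat \<Rightarrow> 'p \<Rightarrow> ('a, 'p) fm) \<Rightarrow> ('s \<times> nat list, 'a, 'p) emodel" where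
  "update M E Rl pre post \<equiv> upd M E Rl (\<lambda>f. sat (pre f)) (\<lambda>f p. sat (post f p))"

lemma in_dom_upd_iff:
  "(x, l @ [f]) \<in> dom (upd M E Rl Pre Post) \<longleftrightarrow> (x, l) \<in> dom M \<and> f \<in> E \<and> Pre f M (x, l)"
  by (simp add: upd_def)

lemma dom_updE:
  assumes "w \<in> dom (upd M E Rl Pre Post)"
  obtains x l f where "w = (x, l @ [f])" "(x, l) \<in> dom M" "f \<in> E" "Pre f M (x, l)"
  using assms by (auto simp: upd_def)

lemma in_rel_upd_iff:
  "((x, l @ [f]), (y, m @ [g])) \<in> rel (upd M E Rl Pre Post) a \<longleftrightarrow>
     (x, l @ [f]) \<in> dom (upd M E Rl Pre Post) \<and> (y, m @ [g]) \<in> dom (upd M E Rl Pre Post) \<and>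
     ((x, l), (y, m)) \<in> rel M a \<and> (f, g) \<in> Rl a"
  by (simp add: upd_def Let_def)

lemma rel_upd_subset:
  "rel (upd M E Rl Pre Post) a \<subseteq> dom (upd M E Rl Pre Post) \<times> dom (upd M E Rl Pre Post)"
  by (auto simp: upd_def Let_def)

lemma in_val_upd_iff:
  "(x, l @ [f]) \<in> val (upd M E Rl Pre Post) p \<longleftrightarrow>
     (x, l @ [f]) \<in> dom (upd M E Rl Pre Post) \<and> Post f p M (x, l)"
  by (simp add: upd_def Let_def)

lemma in_dom_lift_iff: "(x, l) \<in> dom (lift M) \<longleftrightarrow> l = [] \<and> x \<in> dom M"
  by (auto simp: lift_def)

lemma in_rel_lift_iff: "((x, l), (y, m)) \<in> rel (lift M) a \<longleftrightarrow> l = [] \<and> m = [] \<and> (x, y) \<in> rel M a"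
  by (auto simp: lift_def)

lemma in_dom_update_lift_iff:
  "(x, [f]) \<in> dom (update (lift M) E Rl pre post) \<longleftrightarrow> x \<in> dom M \<and> f \<in> E \<and> holds M x (pre f)"
  by (simp add: in_dom_upd_iff[of x "[]" f, simplified] in_dom_lift_iff holds_def)

lemma dom_update_liftE:
  assumes "w \<in> dom (update (lift M) E Rl pre post)"
  obtains x f where "w = (x, [f])" "x \<in> dom M" "f \<in> E" "holds M x (pre f)"
  using assms by (elim dom_updE) (auto simp: in_dom_lift_iff holds_def)

lemma sat_Box_Ag: "sat (Box (Ag a) \<phi>) M w \<longleftrightarrow> (\<forall>v. (w, v) \<in> rel M a \<longrightarrow> sat \<phi> M v)"
  by simp

lemma sat_Box_Star:
  "sat (Box (Star B) \<phi>) M w \<longleftrightarrow> (\<forall>v. (w, v) \<in> (\<Union>a\<in>B. rel M a)\<^sup>* \<longrightarrow> sat \<phi> M v)"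
  by simp

lemma sat_Box_Upd:
  "sat (Box (Upd E Rl pre post e) \<phi>) M w \<longleftrightarrow>
     (sat (pre e) M w \<longrightarrow> sat \<phi> (update M E Rl pre post) (fst w, snd w @ [e]))"
  by simp

lemma fm_induct [case_names Atom Neg Conj Ag Star Upd]:
  assumes "\<And>p. P (Atom p)"
    and "\<And>\<phi>. P \<phi> \<Longrightarrow> P (Neg \<phi>)"
    and "\<And>\<phi> \<psi>. P \<phi> \<Longrightarrow> P \<psi> \<Longrightarrow> P (Conj \<phi> \<psi>)"
    and "\<And>a \<phi>. P \<phi> \<Longrightarrow> P (Box (Ag a) \<phi>)"
    and "\<And>B \<phi>. P \<phi> \<Longrightarrow> P (Box (Star B) \<phi>)"
    and "\<And>E Rl pre post e \<phi>. (\<And>f. P (pre f)) \<Longrightarrow> (\<And>f p. P (post f p)) \<Longrightarrow> P \<phi>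
           \<Longrightarrow> P (Box (Upd E Rl pre post e) \<phi>)"
  shows "P \<phi>"
proof -
  have "P \<phi> \<and> (\<forall>\<psi>. P \<psi> \<longrightarrow> P (Box \<alpha> \<psi>))" for \<alpha>
    by (rule fm_act.induct) (use assms in \<open>auto intro!: assms(6) rangeI\<close>)
  then show ?thesis by blast
qed

definition upd_map :: "('s \<times> nat list \<Rightarrow> 't \<times> nat list) \<Rightarrow> 's \<times> nat list \<Rightarrow> 't \<times> nat list" where
  "upd_map g w = (fst (g (fst w, butlast (snd w))), snd (g (fst w, butlast (snd w))) @ [last (snd w)])"

lemma upd_map_snoc [simp]: "upd_map g (x, l @ [f]) = (fst (g (x, l)), snd (g (x, l)) @ [f])"
  by (simp add: upd_map_def)

lemma upd_map_image_dom_upd: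
  assumes image: "g ` dom N = dom F"
    and pre: "\<And>f w. f \<in> E \<Longrightarrow> w \<in> dom N \<Longrightarrow> Pre' f F (g w) \<longleftrightarrow> Pre f N w"
  shows "upd_map g ` dom (upd N E Rl Pre Post) = dom (upd F E Rl Pre' Post')"
proof (intro equalityI subsetI)
  fix z assume "z \<in> upd_map g ` dom (upd N E Rl Pre Post)"
  then obtain x l f where "z = upd_map g (x, l @ [f])" "(x, l) \<in> dom N" "f \<in> E" "Pre f N (x, l)"
    by (auto elim: dom_updE)
  then show "z \<in> dom (upd F E Rl Pre' Post')"
    using image pre by (auto simp: in_dom_upd_iff)
next
  fix z assume "z \<in> dom (upd F E Rl Pre' Post')"
  then obtain y m f where z: "z = (y, m @ [f])" "(y, m) \<in> dom F" "f \<in> E" "Pre' f F (y, m)"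
    by (elim dom_updE)
  then obtain w where w: "w \<in> dom N" "g w = (y, m)"
    using image by (metis imageE)
  then have "(fst w, snd w @ [f]) \<in> dom (upd N E Rl Pre Post)"
    using z pre[of f w] by (simp add: in_dom_upd_iff)
  moreover have "upd_map g (fst w, snd w @ [f]) = z"
    using w z by simp
  ultimately show "z \<in> upd_map g ` dom (upd N E Rl Pre Post)"
    by (metis imageI)
qed

lemma sat_Box_Upd_transfer:
  assumes "e \<in> E" and "w \<in> dom N"
    and pre: "sat (pre e) F (g w) \<longleftrightarrow> sat (pre e) N w"
    and body: "\<And>v. v \<in> dom (update N E Rl pre post) \<Longrightarrow>
      sat \<phi> (update F E Rl pre post) (upd_map g v) \<longleftrightarrow> sat \<phi> (update N E Rl pre post) v"
  shows "sat (Box (Upd E Rl pre post e) \<phi>) F (g w) \<longleftrightarrow> sat (Box (Upd E Rl pre post e) \<phi>) N w"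
proof (cases "sat (pre e) N w")
  case True
  obtain x l where w: "w = (x, l)"
    by fastforce
  with True assms(1,2) have "(x, l @ [e]) \<in> dom (update N E Rl pre post)"
    by (simp add: in_dom_upd_iff)
  with body[OF this] True pre show ?thesis
    by (simp add: w)
next
  case False
  with pre show ?thesis
    by simp
qed

lemma sat_Box_Ag_Box_Upd:
  assumes "(x, l @ [f]) \<in> dom (update N E Rl pre post)" and "(f, k) \<in> Rl a" and "k \<in> E"
    and "\<And>u. ((x, l), u) \<in> rel N a \<Longrightarrow> u \<in> dom N"
    and "sat (Box (Ag a) \<theta>) (update N E Rl pre post) (x, l @ [f])"
  shows "sat (Box (Ag a) (Box (Upd E Rl pre post k) \<theta>)) N (x, l)"
  unfolding sat_Box_Ag sat_Box_Upd
proof (intro allI impI)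
  fix u assume u: "((x, l), u) \<in> rel N a" "sat (pre k) N u"
  then have "(fst u, snd u @ [k]) \<in> dom (update N E Rl pre post)"
    using assms(3,4) by (auto simp: in_dom_upd_iff)
  then have "((x, l @ [f]), (fst u, snd u @ [k])) \<in> rel (update N E Rl pre post) a"
    using assms(1,2) u(1) by (simp add: in_rel_upd_iff)
  then show "sat \<theta> (update N E Rl pre post) (fst u, snd u @ [k])"
    using assms(5) unfolding sat_Box_Ag by blast
qed

section \<open>Bounded morphisms\<close>

lemma rtrancl_map:
  assumes "\<And>x y. (x, y) \<in> r \<Longrightarrow> (f x, f y) \<in> s" and "(x, y) \<in> r\<^sup>*"
  shows "(f x, f y) \<in> s\<^sup>*"
  using assms(2) by induction (auto intro: rtrancl_into_rtrancl assms(1))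

lemma rtrancl_lift_path:
  assumes "\<And>x z. x \<in> D \<Longrightarrow> (f x, z) \<in> s \<Longrightarrow> \<exists>y\<in>D. (x, y) \<in> r \<and> f y = z"
    and "(f x, z) \<in> s\<^sup>*" and "x \<in> D"
  shows "\<exists>y\<in>D. (x, y) \<in> r\<^sup>* \<and> f y = z"
  using assms(2)
proof induction
  case (step z z')
  then obtain y where "y \<in> D" "(x, y) \<in> r\<^sup>*" "f y = z"
    by blast
  with step.hyps(2) obtain y' where "y' \<in> D" "(y, y') \<in> r" "f y' = z'"
    using assms(1) by blast
  with \<open>(x, y) \<in> r\<^sup>*\<close> show ?case
    by (blast intro: rtrancl_into_rtrancl)
qed (use assms(3) in blast)

lemma rtrancl_closed:
  assumes "\<And>x y. (x, y) \<in> r \<Longrightarrow> y \<in> D" and "(w, v) \<in> r\<^sup>*" and "w \<in> D"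
  shows "v \<in> D"
  using assms(2,3) by induction (auto intro: assms(1))

text \<open>Atoms that a postcondition leaves unchanged (\<open>post f p = Atom p\<close>) are not counted, so that
  a well-formed formula has finitely many atoms.\<close>

primrec atoms_fm :: "('a, 'p) fm \<Rightarrow> 'p set" and atoms_act :: "('a, 'p) act \<Rightarrow> 'p set" where
  "atoms_fm (Atom p) = {p}"
| "atoms_fm (Neg \<phi>) = atoms_fm \<phi>"
| "atoms_fm (Conj \<phi> \<psi>) = atoms_fm \<phi> \<union> atoms_fm \<psi>"
| "atoms_fm (Box \<alpha> \<phi>) = atoms_act \<alpha> \<union> atoms_fm \<phi>"
| "atoms_act (Ag a) = {}"
| "atoms_act (Star B) = {}"
| "atoms_act (Upd E Rl pre post e) =
     (\<Union>f\<in>E. atoms_fm (pre f) \<union> (\<Union>p\<in>{p. post f p \<noteq> Atom p}. atoms_fm (post f p)))"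

lemma finite_atoms_fm: "wf_fm \<psi> \<Longrightarrow> finite (atoms_fm \<psi>)"
  by (induction \<psi> rule: fm_induct) auto

definition bounded_morphism ::
  "'a set \<Rightarrow> 'p set \<Rightarrow> ('v, 'a, 'p) emodel \<Rightarrow> ('w, 'a, 'p) emodel \<Rightarrow> ('v \<Rightarrow> 'w) \<Rightarrow> bool" where
  "bounded_morphism A P N F g \<longleftrightarrow>
     g ` dom N \<subseteq> dom F \<and>
     (\<forall>a\<in>A. rel N a \<subseteq> dom N \<times> dom N) \<and>
     (\<forall>a\<in>A. \<forall>w v. (w, v) \<in> rel N a \<longrightarrow> (g w, g v) \<in> rel F a) \<and>
     (\<forall>a\<in>A. \<forall>w\<in>dom N. \<forall>z. (g w, z) \<in> rel F a \<longrightarrow> (\<exists>v\<in>dom N. (w, v) \<in> rel N a \<and> g v = z)) \<and>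
     (\<forall>p\<in>P. \<forall>w\<in>dom N. w \<in> val N p \<longleftrightarrow> g w \<in> val F p)"

lemma
  assumes "bounded_morphism A P N F g"
  shows bounded_morphism_dom: "w \<in> dom N \<Longrightarrow> g w \<in> dom F"
    and bounded_morphism_rel_subset: "a \<in> A \<Longrightarrow> rel N a \<subseteq> dom N \<times> dom N"
    and bounded_morphism_forth: "a \<in> A \<Longrightarrow> (w, v) \<in> rel N a \<Longrightarrow> (g w, g v) \<in> rel F a"
    and bounded_morphism_back:
      "a \<in> A \<Longrightarrow> w \<in> dom N \<Longrightarrow> (g w, z) \<in> rel F a \<Longrightarrow> \<exists>v\<in>dom N. (w, v) \<in> rel N a \<and> g v = z"
    and bounded_morphism_val: "p \<in> P \<Longrightarrow> w \<in> dom N \<Longrightarrow> w \<in> val N p \<longleftrightarrow> g w \<in> val F p"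
  using assms unfolding bounded_morphism_def by blast+

lemma bounded_morphism_rtrancl_forth:
  assumes "bounded_morphism A P N F g" and "B \<subseteq> A" and "(w, v) \<in> (\<Union>a\<in>B. rel N a)\<^sup>*"
  shows "(g w, g v) \<in> (\<Union>a\<in>B. rel F a)\<^sup>*"
proof (rule rtrancl_map[OF _ assms(3)])
  fix x y assume "(x, y) \<in> (\<Union>a\<in>B. rel N a)"
  then obtain a where a: "a \<in> B" "(x, y) \<in> rel N a"
    by blast
  with bounded_morphism_forth[OF assms(1) subsetD[OF assms(2) a(1)] a(2)]
  show "(g x, g y) \<in> (\<Union>a\<in>B. rel F a)"
    by blast
qed

lemma bounded_morphism_rtrancl_back:
  assumes "bounded_morphism A P N F g" and "B \<subseteq> A"
    and "(g w, z) \<in> (\<Union>a\<in>B. rel F a)\<^sup>*" and "w \<in> dom N"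
  shows "\<exists>v\<in>dom N. (w, v) \<in> (\<Union>a\<in>B. rel N a)\<^sup>* \<and> g v = z"
proof (rule rtrancl_lift_path[where f = g, OF _ assms(3,4)])
  fix x z assume x: "x \<in> dom N" and "(g x, z) \<in> (\<Union>a\<in>B. rel F a)"
  then obtain a where "a \<in> B" "(g x, z) \<in> rel F a"
    by blast
  with bounded_morphism_back[OF assms(1) subsetD[OF assms(2)] x]
  show "\<exists>y\<in>dom N. (x, y) \<in> (\<Union>a\<in>B. rel N a) \<and> g y = z"
    by blast
qed

lemma bounded_morphism_upd:
  assumes g: "bounded_morphism A P N F g"
    and pre: "\<And>f w. f \<in> E \<Longrightarrow> w \<in> dom N \<Longrightarrow> Pre f N w \<longleftrightarrow> Pre' f F (g w)"
    and post: "\<And>f p w. f \<in> E \<Longrightarrow> p \<in> P \<Longrightarrow> w \<in> dom N \<Longrightarrow> Post f p N w \<longleftrightarrow> Post' f p F (g w)"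
  shows "bounded_morphism A P (upd N E Rl Pre Post) (upd F E Rl Pre' Post') (upd_map g)"
proof -
  let ?N = "upd N E Rl Pre Post" and ?F = "upd F E Rl Pre' Post'"
  have dom_upd: "upd_map g w \<in> dom ?F" if "w \<in> dom ?N" for w
    using that by (elim dom_updE) (simp add: in_dom_upd_iff bounded_morphism_dom[OF g] pre)
  have forth: "(upd_map g w, upd_map g v) \<in> rel ?F a" if "a \<in> A" "(w, v) \<in> rel ?N a" for a w v
  proof -
    have "w \<in> dom ?N" "v \<in> dom ?N"
      using subsetD[OF rel_upd_subset that(2)] by simp_all
    moreover obtain x l f y m h where "w = (x, l @ [f])" "v = (y, m @ [h])"
      using \<open>w \<in> dom ?N\<close> \<open>v \<in> dom ?N\<close> by (metis dom_updE)
    moreover from this that have "(g (x, l), g (y, m)) \<in> rel F a" "(f, h) \<in> Rl a"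
      using bounded_morphism_forth[OF g] by (auto simp: in_rel_upd_iff)
    ultimately show ?thesis
      using dom_upd[OF \<open>w \<in> dom ?N\<close>] dom_upd[OF \<open>v \<in> dom ?N\<close>] by (simp add: in_rel_upd_iff)
  qed
  have lift: "\<exists>v\<in>dom ?N. (w, v) \<in> rel ?N a \<and> upd_map g v = z"
    if a: "a \<in> A" and w: "w \<in> dom ?N" and wz: "(upd_map g w, z) \<in> rel ?F a" for a w z
  proof -
    obtain x l f where w_eq: "w = (x, l @ [f])" and "(x, l) \<in> dom N"
      using w by (elim dom_updE)
    obtain y m h where z_eq: "z = (y, m @ [h])" and "h \<in> E" "Pre' h F (y, m)"
      using subsetD[OF rel_upd_subset wz] by (auto elim: dom_updE)
    from wz have "(g (x, l), (y, m)) \<in> rel F a" "(f, h) \<in> Rl a"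
      by (simp_all add: w_eq z_eq in_rel_upd_iff)
    then obtain v where v: "v \<in> dom N" "((x, l), v) \<in> rel N a" "g v = (y, m)"
      using bounded_morphism_back[OF g a \<open>(x, l) \<in> dom N\<close>] by blast
    let ?v = "(fst v, snd v @ [h])"
    have "?v \<in> dom ?N"
      using v \<open>h \<in> E\<close> \<open>Pre' h F (y, m)\<close> pre[of h v] by (simp add: in_dom_upd_iff)
    moreover have "(w, ?v) \<in> rel ?N a"
      using \<open>?v \<in> dom ?N\<close> w v(2) \<open>(f, h) \<in> Rl a\<close> by (simp add: w_eq in_rel_upd_iff)
    moreover have "upd_map g ?v = z"
      using v(3) by (simp add: z_eq)
    ultimately show ?thesis
      by blast
  qed
  have val: "w \<in> val ?N p \<longleftrightarrow> upd_map g w \<in> val ?F p" if p: "p \<in> P" and w: "w \<in> dom ?N" for p w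
  proof -
    obtain x l f where "w = (x, l @ [f])" "(x, l) \<in> dom N" "f \<in> E"
      using w by (elim dom_updE)
    then show ?thesis
      using w dom_upd[OF w] post[of f p "(x, l)"] p by (simp add: in_val_upd_iff)
  qed
  show ?thesis
    unfolding bounded_morphism_def using dom_upd rel_upd_subset forth lift val
    by (intro conjI ballI allI impI image_subsetI) simp_all
qed

lemma bounded_morphism_sat_Box_Ag:
  assumes g: "bounded_morphism A P N F g" and a: "a \<in> A" and w: "w \<in> dom N"
    and IH: "\<And>v. v \<in> dom N \<Longrightarrow> sat \<phi> F (g v) \<longleftrightarrow> sat \<phi> N v"
  shows "sat (Box (Ag a) \<phi>) F (g w) \<longleftrightarrow> sat (Box (Ag a) \<phi>) N w"
proof -
  have "v \<in> dom N" if "(w, v) \<in> rel N a" for v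
    using bounded_morphism_rel_subset[OF g a] that by blast
  then have "sat (Box (Ag a) \<phi>) N w \<longleftrightarrow> (\<forall>v. (w, v) \<in> rel N a \<longrightarrow> sat \<phi> F (g v))"
    using IH by auto
  also have "\<dots> \<longleftrightarrow> (\<forall>z. (g w, z) \<in> rel F a \<longrightarrow> sat \<phi> F z)"
    using bounded_morphism_forth[OF g a] bounded_morphism_back[OF g a w] by blast
  finally show ?thesis
    by simp
qed

lemma bounded_morphism_sat_Box_Star:
  assumes g: "bounded_morphism A P N F g" and B: "B \<subseteq> A" and w: "w \<in> dom N"
    and IH: "\<And>v. v \<in> dom N \<Longrightarrow> sat \<phi> F (g v) \<longleftrightarrow> sat \<phi> N v"
  shows "sat (Box (Star B) \<phi>) F (g w) \<longleftrightarrow> sat (Box (Star B) \<phi>) N w"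
proof -
  have "v \<in> dom N" if "(w, v) \<in> (\<Union>a\<in>B. rel N a)\<^sup>*" for v
  proof (rule rtrancl_closed[OF _ that w])
    fix x y assume "(x, y) \<in> (\<Union>a\<in>B. rel N a)"
    with bounded_morphism_rel_subset[OF g] B show "y \<in> dom N"
      by blast
  qed
  then have "sat (Box (Star B) \<phi>) N w \<longleftrightarrow> (\<forall>v. (w, v) \<in> (\<Union>a\<in>B. rel N a)\<^sup>* \<longrightarrow> sat \<phi> F (g v))"
    using IH by auto
  also have "\<dots> \<longleftrightarrow> (\<forall>z. (g w, z) \<in> (\<Union>a\<in>B. rel F a)\<^sup>* \<longrightarrow> sat \<phi> F z)"
    using bounded_morphism_rtrancl_forth[OF g B] bounded_morphism_rtrancl_back[OF g B _ w] by blast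
  finally show ?thesis
    by simp
qed

theorem sat_bounded_morphism:
  assumes "bounded_morphism A P N F g"
    and "wf_fm \<psi>" and "agents_fm \<psi> \<subseteq> A" and "atoms_fm \<psi> \<subseteq> P" and "w \<in> dom N"
  shows "sat \<psi> F (g w) \<longleftrightarrow> sat \<psi> N w"
  using assms
proof (induction \<psi> arbitrary: N F g w rule: fm_induct)
  case (Atom p)
  then show ?case
    by (simp add: bounded_morphism_val)
next
  case (Ag a \<phi>)
  then show ?case
    by (intro bounded_morphism_sat_Box_Ag) auto
next
  case (Star B \<phi>)
  then show ?case
    by (intro bounded_morphism_sat_Box_Star) auto
next
  case (Upd E Rl pre post e \<phi>)
  note g = Upd.prems(1)
  have pre: "sat (pre f) F (g v) \<longleftrightarrow> sat (pre f) N v" if "f \<in> E" "v \<in> dom N" for f v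
  proof (rule Upd.IH(1)[OF g _ _ _ \<open>v \<in> dom N\<close>])
    show "wf_fm (pre f)" "agents_fm (pre f) \<subseteq> A" "atoms_fm (pre f) \<subseteq> P"
      using Upd.prems(2-4) \<open>f \<in> E\<close> by auto
  qed
  have post: "sat (post f p) F (g v) \<longleftrightarrow> sat (post f p) N v" if "f \<in> E" "p \<in> P" "v \<in> dom N" for f p v
  proof (cases "post f p = Atom p")
    case True
    then show ?thesis
      using bounded_morphism_val[OF g] that by simp
  next
    case False
    show ?thesis
    proof (rule Upd.IH(2)[OF g _ _ _ \<open>v \<in> dom N\<close>])
      show "wf_fm (post f p)" "agents_fm (post f p) \<subseteq> A" "atoms_fm (post f p) \<subseteq> P"
        using Upd.prems(2-4) \<open>f \<in> E\<close> False by (simp_all add: UN_subset_iff)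
    qed
  qed
  have "bounded_morphism A P (update N E Rl pre post) (update F E Rl pre post) (upd_map g)"
    using g pre post by (intro bounded_morphism_upd) simp_all
  moreover have "e \<in> E"
    using Upd.prems(2) by simp
  ultimately show ?case
    using Upd.prems(2-5) pre by (intro sat_Box_Upd_transfer Upd.IH(3)) simp_all
qed simp_all

section \<open>Filtration\<close>

text \<open>In the closure of \<open>[U, e]\<phi>\<close>, the closure \<open>C\<close> of \<open>\<phi>\<close> only occurs under update modalities,
  because \<open>\<phi>\<close> is evaluated in the updated model.\<close>

primrec fl_closure :: "('a, 'p) fm \<Rightarrow> ('a, 'p) fm set"
  and fl_closure_box :: "('a, 'p) act \<Rightarrow> ('a, 'p) fm \<Rightarrow> ('a, 'p) fm set \<Rightarrow> ('a, 'p) fm set" where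
  "fl_closure (Atom p) = {Atom p}"
| "fl_closure (Neg \<phi>) = insert (Neg \<phi>) (fl_closure \<phi>)"
| "fl_closure (Conj \<phi> \<psi>) = insert (Conj \<phi> \<psi>) (fl_closure \<phi> \<union> fl_closure \<psi>)"
| "fl_closure (Box \<alpha> \<phi>) = fl_closure_box \<alpha> (Box \<alpha> \<phi>) (fl_closure \<phi>)"
| "fl_closure_box (Ag a) \<chi> C = insert \<chi> C"
| "fl_closure_box (Star B) \<chi> C = insert \<chi> ((\<lambda>a. Box (Ag a) \<chi>) ` B \<union> C)"
| "fl_closure_box (Upd E Rl pre post e) \<chi> C =
     {Box (Upd E Rl pre post f) \<theta> | f \<theta>. f \<in> E \<and> \<theta> \<in> C}
   \<union> {Box (Ag a) (Box (Upd E Rl pre post f) \<theta>) | a f \<theta>. f \<in> E \<and> Box (Ag a) \<theta> \<in> C}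
   \<union> (\<Union>f\<in>E. fl_closure (pre f))
   \<union> (\<Union>f\<in>E. \<Union>p\<in>{p. Atom p \<in> C}. fl_closure (post f p))"

lemma finite_fl_closure:
  fixes \<psi> :: "('a :: finite, 'p) fm"
  assumes "wf_fm \<psi>"
  shows "finite (fl_closure \<psi>)"
  using assms
proof (induction \<psi> rule: fm_induct)
  case (Upd E Rl pre post e \<phi>)
  let ?C = "fl_closure \<phi>"
  have E: "finite E" and C: "finite ?C"
    using Upd by simp_all
  let ?V = "(\<lambda>(a, \<theta>). Box (Ag a) \<theta>) -` ?C"
  have "finite ?V"
    using C by (rule finite_vimageI) (auto simp: inj_on_def)
  then have "finite ((\<lambda>((a, \<theta>), f). Box (Ag a) (Box (Upd E Rl pre post f) \<theta>)) ` (?V \<times> E))"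
    using E by simp
  moreover have "{Box (Ag a) (Box (Upd E Rl pre post f) \<theta>) | a f \<theta>. f \<in> E \<and> Box (Ag a) \<theta> \<in> ?C}
    \<subseteq> (\<lambda>((a, \<theta>), f). Box (Ag a) (Box (Upd E Rl pre post f) \<theta>)) ` (?V \<times> E)"
    by (auto intro!: image_eqI[where x = "((_, _), _)"])
  ultimately have ag: "finite {Box (Ag a) (Box (Upd E Rl pre post f) \<theta>) | a f \<theta>. f \<in> E \<and> Box (Ag a) \<theta> \<in> ?C}"
    by (rule finite_subset[rotated])
  have "{Box (Upd E Rl pre post f) \<theta> | f \<theta>. f \<in> E \<and> \<theta> \<in> ?C} = (\<lambda>(f, \<theta>). Box (Upd E Rl pre post f) \<theta>) ` (E \<times> ?C)"
    by force
  then have upd: "finite {Box (Upd E Rl pre post f) \<theta> | f \<theta>. f \<in> E \<and> \<theta> \<in> ?C}"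
    using E C by simp
  have "finite {p. Atom p \<in> ?C}"
    using finite_vimageI[OF C, of Atom] by (simp add: vimage_def inj_def)
  then show ?case
    using Upd E ag upd by simp
qed simp_all

definition filtration ::
  "('a, 'p) fm set \<Rightarrow> ('s \<times> nat list, 'a, 'p) emodel \<Rightarrow> ('t \<times> nat list, 'a, 'p) emodel
   \<Rightarrow> ('s \<times> nat list \<Rightarrow> 't \<times> nat list) \<Rightarrow> bool" where
  "filtration G N F h \<longleftrightarrow>
     h ` dom N = dom F \<and>
     (\<forall>a. rel N a \<subseteq> dom N \<times> dom N) \<and> (\<forall>a. rel F a \<subseteq> dom F \<times> dom F) \<and>
     (\<forall>a w v. (w, v) \<in> rel N a \<longrightarrow> (h w, h v) \<in> rel F a) \<and>
     (\<forall>a \<psi> w v. Box (Ag a) \<psi> \<in> G \<longrightarrow> w \<in> dom N \<longrightarrow> v \<in> dom N \<longrightarrow> (h w, h v) \<in> rel F a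
        \<longrightarrow> sat (Box (Ag a) \<psi>) N w \<longrightarrow> sat \<psi> N v) \<and>
     (\<forall>\<psi> w v. \<psi> \<in> G \<longrightarrow> w \<in> dom N \<longrightarrow> v \<in> dom N \<longrightarrow> h w = h v
        \<longrightarrow> (sat \<psi> N w \<longleftrightarrow> sat \<psi> N v)) \<and>
     (\<forall>p w. Atom p \<in> G \<longrightarrow> w \<in> dom N \<longrightarrow> (w \<in> val N p \<longleftrightarrow> h w \<in> val F p))"

lemma
  assumes "filtration G N F h"
  shows filtration_image: "h ` dom N = dom F"
    and filtration_rel_dom: "(w, v) \<in> rel N a \<Longrightarrow> v \<in> dom N"
    and filtration_rel_subset: "rel F a \<subseteq> dom F \<times> dom F"
    and filtration_forth: "(w, v) \<in> rel N a \<Longrightarrow> (h w, h v) \<in> rel F a"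
    and filtration_box: "Box (Ag a) \<psi> \<in> G \<Longrightarrow> w \<in> dom N \<Longrightarrow> v \<in> dom N \<Longrightarrow> (h w, h v) \<in> rel F a
      \<Longrightarrow> sat (Box (Ag a) \<psi>) N w \<Longrightarrow> sat \<psi> N v"
    and filtration_agree: "\<psi> \<in> G \<Longrightarrow> w \<in> dom N \<Longrightarrow> v \<in> dom N \<Longrightarrow> h w = h v
      \<Longrightarrow> sat \<psi> N w \<longleftrightarrow> sat \<psi> N v"
    and filtration_val: "Atom p \<in> G \<Longrightarrow> w \<in> dom N \<Longrightarrow> w \<in> val N p \<longleftrightarrow> h w \<in> val F p"
  using assms unfolding filtration_def by blast+

lemma filtration_rel_preimage:
  assumes "filtration G N F h" and "(y, z) \<in> rel F a"
  obtains v where "v \<in> dom N" "h v = z"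
  using subsetD[OF filtration_rel_subset[OF assms(1)] assms(2)] filtration_image[OF assms(1)]
  by (metis SigmaD2 imageE)

lemma filtration_upd:
  assumes fi: "filtration G N F h"
    and pre: "\<And>f w. f \<in> E \<Longrightarrow> w \<in> dom N \<Longrightarrow> sat (pre f) F (h w) \<longleftrightarrow> sat (pre f) N w"
    and post: "\<And>f p w. f \<in> E \<Longrightarrow> Atom p \<in> G' \<Longrightarrow> w \<in> dom N
      \<Longrightarrow> sat (post f p) F (h w) \<longleftrightarrow> sat (post f p) N w"
    and upd_in: "\<And>f \<theta>. f \<in> E \<Longrightarrow> \<theta> \<in> G' \<Longrightarrow> Box (Upd E Rl pre post f) \<theta> \<in> G"
    and ag_upd_in: "\<And>f a \<theta>. f \<in> E \<Longrightarrow> Box (Ag a) \<theta> \<in> G'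
      \<Longrightarrow> Box (Ag a) (Box (Upd E Rl pre post f) \<theta>) \<in> G"
  shows "filtration G' (update N E Rl pre post) (update F E Rl pre post) (upd_map h)"
proof -
  let ?N = "update N E Rl pre post" and ?F = "update F E Rl pre post"
  have image: "upd_map h ` dom ?N = dom ?F"
    using filtration_image[OF fi] pre by (rule upd_map_image_dom_upd)
  then have dom_upd: "upd_map h w \<in> dom ?F" if "w \<in> dom ?N" for w
    using that by blast
  have forth: "(upd_map h w, upd_map h v) \<in> rel ?F a" if "(w, v) \<in> rel ?N a" for a w v
  proof -
    have "w \<in> dom ?N" "v \<in> dom ?N"
      using subsetD[OF rel_upd_subset that] by simp_all
    moreover obtain x l f y m k where "w = (x, l @ [f])" "v = (y, m @ [k])"
      using \<open>w \<in> dom ?N\<close> \<open>v \<in> dom ?N\<close> by (metis dom_updE)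
    moreover from this that have "(h (x, l), h (y, m)) \<in> rel F a" "(f, k) \<in> Rl a"
      using filtration_forth[OF fi] by (auto simp: in_rel_upd_iff)
    ultimately show ?thesis
      using dom_upd[OF \<open>w \<in> dom ?N\<close>] dom_upd[OF \<open>v \<in> dom ?N\<close>] by (simp add: in_rel_upd_iff)
  qed
  have box: "sat \<theta> ?N v"
    if G': "Box (Ag a) \<theta> \<in> G'" and w: "w \<in> dom ?N" and v: "v \<in> dom ?N"
      and wv: "(upd_map h w, upd_map h v) \<in> rel ?F a" and sat_w: "sat (Box (Ag a) \<theta>) ?N w"
    for a \<theta> w v
  proof -
    obtain x l f where w_eq: "w = (x, l @ [f])" and "(x, l) \<in> dom N"
      using w by (elim dom_updE)
    obtain y m k where v_eq: "v = (y, m @ [k])" and "(y, m) \<in> dom N" "k \<in> E" "sat (pre k) N (y, m)"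
      using v by (elim dom_updE)
    from wv have "(h (x, l), h (y, m)) \<in> rel F a" and "(f, k) \<in> Rl a"
      by (simp_all add: w_eq v_eq in_rel_upd_iff)
    moreover have "sat (Box (Ag a) (Box (Upd E Rl pre post k) \<theta>)) N (x, l)"
      using w sat_w \<open>(f, k) \<in> Rl a\<close> \<open>k \<in> E\<close>
      by (intro sat_Box_Ag_Box_Upd filtration_rel_dom[OF fi]) (simp_all add: w_eq)
    ultimately have "sat (Box (Upd E Rl pre post k) \<theta>) N (y, m)"
      using filtration_box[OF fi ag_upd_in[OF \<open>k \<in> E\<close> G'] \<open>(x, l) \<in> dom N\<close> \<open>(y, m) \<in> dom N\<close>]
      by blast
    with \<open>sat (pre k) N (y, m)\<close> show ?thesis
      by (simp add: v_eq)
  qed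
  have agree: "sat \<theta> ?N w \<longleftrightarrow> sat \<theta> ?N v"
    if G': "\<theta> \<in> G'" and w: "w \<in> dom ?N" and v: "v \<in> dom ?N" and hwv: "upd_map h w = upd_map h v"
    for \<theta> w v
  proof -
    obtain x l f where w_eq: "w = (x, l @ [f])" and "(x, l) \<in> dom N" "f \<in> E" "sat (pre f) N (x, l)"
      using w by (elim dom_updE)
    obtain y m k where v_eq: "v = (y, m @ [k])" and "(y, m) \<in> dom N" "sat (pre k) N (y, m)"
      using v by (elim dom_updE)
    from hwv have "h (x, l) = h (y, m)" "f = k"
      by (simp_all add: w_eq v_eq prod_eq_iff)
    with filtration_agree[OF fi upd_in[OF \<open>f \<in> E\<close> G'] \<open>(x, l) \<in> dom N\<close> \<open>(y, m) \<in> dom N\<close>]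
    show ?thesis
      using \<open>sat (pre f) N (x, l)\<close> \<open>sat (pre k) N (y, m)\<close> by (simp add: w_eq v_eq)
  qed
  have val: "w \<in> val ?N p \<longleftrightarrow> upd_map h w \<in> val ?F p" if "Atom p \<in> G'" "w \<in> dom ?N" for p w
  proof -
    obtain x l f where "w = (x, l @ [f])" "(x, l) \<in> dom N" "f \<in> E"
      using \<open>w \<in> dom ?N\<close> by (elim dom_updE)
    then show ?thesis
      using dom_upd[OF that(2)] that post[of f p "(x, l)"] by (simp add: in_val_upd_iff)
  qed
  show ?thesis
    unfolding filtration_def
    by (intro conjI allI impI) (rule image rel_upd_subset forth box agree val; assumption)+
qed

lemma sat_Box_Star_unfold:
  assumes "sat (Box (Star B) \<theta>) N w" and "a \<in> B"
  shows "sat (Box (Ag a) (Box (Star B) \<theta>)) N w"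
  using assms by (auto intro: converse_rtrancl_into_rtrancl)

lemma filtration_rtrancl_lift:
  assumes fi: "filtration G N F h" and G: "\<And>a. a \<in> B \<Longrightarrow> Box (Ag a) (Box (Star B) \<theta>) \<in> G"
    and "(h w, z) \<in> (\<Union>a\<in>B. rel F a)\<^sup>*" and "w \<in> dom N" and "sat (Box (Star B) \<theta>) N w"
  shows "\<exists>v\<in>dom N. h v = z \<and> sat (Box (Star B) \<theta>) N v"
  using assms(3)
proof induction
  case base
  then show ?case
    using assms(4,5) by blast
next
  case (step y z)
  then obtain v where v: "v \<in> dom N" "h v = y" "sat (Box (Star B) \<theta>) N v"
    by blast
  from step.hyps(2) obtain a where a: "a \<in> B" "(y, z) \<in> rel F a"
    by blast
  then obtain u where u: "u \<in> dom N" "h u = z"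
    by (elim filtration_rel_preimage[OF fi])
  have "sat (Box (Star B) \<theta>) N u"
    using filtration_box[OF fi G[OF a(1)] v(1) u(1)] a(2) v(2) u(2) sat_Box_Star_unfold[OF v(3) a(1)]
    by simp
  with u show ?case
    by blast
qed

lemma filtration_sat_Box_Ag:
  assumes fi: "filtration G N F h" and G: "Box (Ag a) \<phi> \<in> G" and w: "w \<in> dom N"
    and IH: "\<And>v. v \<in> dom N \<Longrightarrow> sat \<phi> F (h v) \<longleftrightarrow> sat \<phi> N v"
  shows "sat (Box (Ag a) \<phi>) F (h w) \<longleftrightarrow> sat (Box (Ag a) \<phi>) N w"
proof
  assume N: "sat (Box (Ag a) \<phi>) N w"
  show "sat (Box (Ag a) \<phi>) F (h w)"
  proof (unfold sat_Box_Ag, intro allI impI)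
    fix z assume z: "(h w, z) \<in> rel F a"
    then obtain v where "v \<in> dom N" "h v = z"
      by (rule filtration_rel_preimage[OF fi])
    with filtration_box[OF fi G w _ _ N] z IH show "sat \<phi> F z"
      by blast
  qed
next
  assume F: "sat (Box (Ag a) \<phi>) F (h w)"
  show "sat (Box (Ag a) \<phi>) N w"
  proof (unfold sat_Box_Ag, intro allI impI)
    fix v assume wv: "(w, v) \<in> rel N a"
    with F have "sat \<phi> F (h v)"
      using filtration_forth[OF fi wv] unfolding sat_Box_Ag by blast
    then show "sat \<phi> N v"
      using IH[OF filtration_rel_dom[OF fi wv]] by simp
  qed
qed

lemma filtration_sat_Box_Star:
  assumes fi: "filtration G N F h" and G: "\<And>a. a \<in> B \<Longrightarrow> Box (Ag a) (Box (Star B) \<phi>) \<in> G"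
    and w: "w \<in> dom N" and IH: "\<And>v. v \<in> dom N \<Longrightarrow> sat \<phi> F (h v) \<longleftrightarrow> sat \<phi> N v"
  shows "sat (Box (Star B) \<phi>) F (h w) \<longleftrightarrow> sat (Box (Star B) \<phi>) N w"
proof
  assume N: "sat (Box (Star B) \<phi>) N w"
  show "sat (Box (Star B) \<phi>) F (h w)"
  proof (unfold sat_Box_Star, intro allI impI)
    fix z assume "(h w, z) \<in> (\<Union>a\<in>B. rel F a)\<^sup>*"
    then obtain v where v: "v \<in> dom N" "h v = z" "sat (Box (Star B) \<phi>) N v"
      using filtration_rtrancl_lift[OF fi G _ w N] by blast
    then have "sat \<phi> N v"
      unfolding sat_Box_Star by blast
    then show "sat \<phi> F z"
      using IH[OF v(1)] v(2) by simp
  qed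
next
  assume F: "sat (Box (Star B) \<phi>) F (h w)"
  show "sat (Box (Star B) \<phi>) N w"
  proof (unfold sat_Box_Star, intro allI impI)
    fix v assume wv: "(w, v) \<in> (\<Union>a\<in>B. rel N a)\<^sup>*"
    have "(h w, h v) \<in> (\<Union>a\<in>B. rel F a)\<^sup>*"
      by (rule rtrancl_map[OF _ wv]) (use filtration_forth[OF fi] in blast)
    with F have "sat \<phi> F (h v)"
      unfolding sat_Box_Star by blast
    moreover have "v \<in> dom N"
      by (rule rtrancl_closed[OF _ wv w]) (use filtration_rel_dom[OF fi] in blast)
    ultimately show "sat \<phi> N v"
      using IH by blast
  qed
qed

theorem sat_filtration:
  assumes "filtration G N F h" and "wf_fm \<psi>" and "fl_closure \<psi> \<subseteq> G" and "w \<in> dom N"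
  shows "sat \<psi> F (h w) \<longleftrightarrow> sat \<psi> N w"
  using assms
proof (induction \<psi> arbitrary: G N F h w rule: fm_induct)
  case (Atom p)
  then show ?case
    by (simp add: filtration_val)
next
  case (Ag a \<phi>)
  then show ?case
    by (intro filtration_sat_Box_Ag) auto
next
  case (Star B \<phi>)
  then show ?case
    by (intro filtration_sat_Box_Star) auto
next
  case (Upd E Rl pre post e \<phi>)
  note fi = Upd.prems(1)
  let ?C = "fl_closure \<phi>"
  have pre: "sat (pre f) F (h v) \<longleftrightarrow> sat (pre f) N v" if "f \<in> E" "v \<in> dom N" for f v
  proof (rule Upd.IH(1)[OF fi _ _ \<open>v \<in> dom N\<close>])
    show "wf_fm (pre f)" "fl_closure (pre f) \<subseteq> G"
      using Upd.prems(2,3) \<open>f \<in> E\<close> by auto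
  qed
  have post: "sat (post f p) F (h v) \<longleftrightarrow> sat (post f p) N v"
    if "f \<in> E" "Atom p \<in> ?C" "v \<in> dom N" for f p v
  proof (rule Upd.IH(2)[OF fi _ _ \<open>v \<in> dom N\<close>])
    show "wf_fm (post f p)"
      using Upd.prems(2) that(1) by simp
    show "fl_closure (post f p) \<subseteq> G"
      using Upd.prems(3) that(1,2) by (simp add: UN_subset_iff)
  qed
  have fi': "filtration ?C (update N E Rl pre post) (update F E Rl pre post) (upd_map h)"
  proof (rule filtration_upd[OF fi pre post])
    show "Box (Upd E Rl pre post f) \<theta> \<in> G" if "f \<in> E" "\<theta> \<in> ?C" for f \<theta>
      using Upd.prems(3) that by auto
    show "Box (Ag a) (Box (Upd E Rl pre post f) \<theta>) \<in> G" if "f \<in> E" "Box (Ag a) \<theta> \<in> ?C" for f a \<theta>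
      using Upd.prems(3) that by auto
  qed
  have "e \<in> E"
    using Upd.prems(2) by simp
  then show ?case
    using Upd.prems(2,4) pre by (intro sat_Box_Upd_transfer Upd.IH(3)[OF fi']) simp_all
qed simp_all

definition fm_type :: "('a, 'p) fm set \<Rightarrow> ('s \<times> nat list, 'a, 'p) emodel \<Rightarrow> 's \<times> nat list
   \<Rightarrow> ('a, 'p) fm set \<times> nat list" where
  "fm_type H N w = ({\<psi> \<in> H. sat \<psi> N w}, [])"

definition smallest_filtration ::
  "('a, 'p) fm set \<Rightarrow> ('s \<times> nat list, 'a, 'p) emodel \<Rightarrow> (('a, 'p) fm set \<times> nat list, 'a, 'p) emodel" where
  "smallest_filtration H N =
     \<lparr> dom = fm_type H N ` dom N,
       rel = (\<lambda>a. {(fm_type H N w, fm_type H N v) | w v. (w, v) \<in> rel N a}),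
       val = (\<lambda>p. {fm_type H N w | w. w \<in> dom N \<and> w \<in> val N p}) \<rparr>"

lemma fm_type_eq_sat:
  assumes "fm_type H N w = fm_type H N v" and "\<psi> \<in> H"
  shows "sat \<psi> N w \<longleftrightarrow> sat \<psi> N v"
  using assms unfolding fm_type_def by blast

lemma filtration_smallest_filtration:
  assumes rel: "\<And>a. rel N a \<subseteq> dom N \<times> dom N"
    and H: "G \<subseteq> H" "\<And>a \<psi>. Box (Ag a) \<psi> \<in> G \<Longrightarrow> \<psi> \<in> H"
  shows "filtration G N (smallest_filtration H N) (fm_type H N)"
  unfolding filtration_def
proof (intro conjI allI impI)
  fix a \<psi> w v
  assume G: "Box (Ag a) \<psi> \<in> G" and "(fm_type H N w, fm_type H N v) \<in> rel (smallest_filtration H N) a"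
    and w: "sat (Box (Ag a) \<psi>) N w"
  then obtain w' v' where "(w', v') \<in> rel N a" "fm_type H N w = fm_type H N w'" "fm_type H N v = fm_type H N v'"
    by (auto simp: smallest_filtration_def)
  moreover from this(2) G H w have "sat (Box (Ag a) \<psi>) N w'"
    using fm_type_eq_sat by blast
  ultimately show "sat \<psi> N v"
    using fm_type_eq_sat H(2)[OF G] unfolding sat_Box_Ag by blast
next
  fix p w
  assume "Atom p \<in> G" "w \<in> dom N"
  show "w \<in> val N p \<longleftrightarrow> fm_type H N w \<in> val (smallest_filtration H N) p"
  proof
    assume "w \<in> val N p"
    with \<open>w \<in> dom N\<close> show "fm_type H N w \<in> val (smallest_filtration H N) p"
      unfolding smallest_filtration_def by (simp only: emodel.simps) blast
  next
    assume "fm_type H N w \<in> val (smallest_filtration H N) p"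
    then obtain w' where "fm_type H N w = fm_type H N w'" "w' \<in> val N p"
      by (auto simp: smallest_filtration_def)
    with fm_type_eq_sat[of H N w w' "Atom p"] H(1) \<open>Atom p \<in> G\<close> show "w \<in> val N p"
      by auto
  qed
next
  fix \<psi> w v
  assume "\<psi> \<in> G" "fm_type H N w = fm_type H N v"
  then show "sat \<psi> N w \<longleftrightarrow> sat \<psi> N v"
    using fm_type_eq_sat H(1) by blast
qed (use rel in \<open>auto simp: smallest_filtration_def\<close>)

lemma finite_smallest_filtration:
  assumes "finite H"
  shows "finite (dom (smallest_filtration H N))"
proof -
  have "dom (smallest_filtration H N) \<subseteq> (\<lambda>X. (X, [])) ` Pow H"
    by (auto simp: smallest_filtration_def fm_type_def)
  then show ?thesis
    using assms by (auto intro: finite_subset)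
qed

lemma finite_model_property:
  fixes N :: "('w, 'a :: finite, 'p) emodel"
  assumes "is_model N" and "t \<in> dom N" and "holds N t \<phi>" and "wf_fm \<phi>"
  obtains F :: "(('a, 'p) fm set \<times> nat list, 'a, 'p) emodel" and z
  where "finite (dom F)" "\<forall>a. rel F a \<subseteq> dom F \<times> dom F" "z \<in> dom F" "sat \<phi> F z"
proof -
  let ?G = "fl_closure \<phi>"
  let ?H = "?G \<union> {\<psi>. \<exists>a. Box (Ag a) \<psi> \<in> ?G}"
  let ?F = "smallest_filtration ?H (lift N)"
  have "finite ?G"
    using assms(4) by (rule finite_fl_closure)
  moreover have "finite ((\<lambda>(a, \<psi>). Box (Ag a) \<psi>) -` ?G)"
    using \<open>finite ?G\<close> by (rule finite_vimageI) (auto simp: inj_on_def)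
  moreover have "{\<psi>. \<exists>a. Box (Ag a) \<psi> \<in> ?G} = snd ` ((\<lambda>(a, \<psi>). Box (Ag a) \<psi>) -` ?G)"
    by (auto intro: image_eqI[where x = "(_, _)"])
  ultimately have "finite ?H"
    by simp
  have "rel (lift N) a \<subseteq> dom (lift N) \<times> dom (lift N)" for a
    using assms(1) by (auto simp: is_model_def lift_def)
  then have fi: "filtration ?G (lift N) ?F (fm_type ?H (lift N))"
    by (rule filtration_smallest_filtration) auto
  have t: "(t, []) \<in> dom (lift N)"
    using assms(2) by (simp add: in_dom_lift_iff)
  show ?thesis
  proof
    show "finite (dom ?F)"
      using \<open>finite ?H\<close> by (rule finite_smallest_filtration)
    show "\<forall>a. rel ?F a \<subseteq> dom ?F \<times> dom ?F"
      using filtration_rel_subset[OF fi] by blast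
    show "fm_type ?H (lift N) (t, []) \<in> dom ?F"
      using t by (simp add: smallest_filtration_def)
    show "sat \<phi> ?F (fm_type ?H (lift N) (t, []))"
      using sat_filtration[OF fi assms(4) subset_refl t] assms(3) by (simp add: holds_def)
  qed
qed

section \<open>The serial core is definable\<close>

definition top_fm :: "('a, 'p) fm" where
  "top_fm = Neg (Conj (Atom undefined) (Neg (Atom undefined)))"

lemma sat_top_fm [simp]: "sat top_fm M w"
  by (simp add: top_fm_def)

lemma wf_top_fm [simp]: "wf_fm top_fm"
  by (simp add: top_fm_def)

lemma sat_foldr_Conj: "sat (foldr Conj \<phi>s top_fm) M w \<longleftrightarrow> (\<forall>\<phi>\<in>set \<phi>s. sat \<phi> M w)"
  by (induction \<phi>s) simp_all

lemma wf_foldr_Conj: "\<forall>\<phi>\<in>set \<phi>s. wf_fm \<phi> \<Longrightarrow> wf_fm (foldr Conj \<phi>s top_fm)"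
  by (induction \<phi>s) simp_all

primrec serial_fm :: "'a list \<Rightarrow> nat \<Rightarrow> ('a, 'p) fm" where
  "serial_fm as 0 = top_fm"
| "serial_fm as (Suc k) = foldr Conj (map (\<lambda>a. Dia (Ag a) (serial_fm as k)) as) top_fm"

lemma wf_serial_fm: "wf_fm (serial_fm as k)"
  by (induction k) (simp_all add: wf_foldr_Conj Dia_def)

lemma holds_Dia_Ag: "holds M x (Dia (Ag a) \<phi>) \<longleftrightarrow> (\<exists>y. (x, y) \<in> rel M a \<and> holds M y \<phi>)"
  by (auto simp: holds_def Dia_def lift_def)

lemma holds_serial_fm_Suc:
  "holds M x (serial_fm as (Suc k)) \<longleftrightarrow> (\<forall>a\<in>set as. \<exists>y. (x, y) \<in> rel M a \<and> holds M y (serial_fm as k))"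
  unfolding holds_def by (simp add: sat_foldr_Conj holds_Dia_Ag[unfolded holds_def])

lemma serial_core_definable:
  fixes M :: "('s, 'a, 'p) emodel"
  assumes "is_model M" and "finite (dom M)" and "S \<subseteq> dom M"
    and serial: "\<forall>a\<in>set as. \<forall>x\<in>S. \<exists>y\<in>S. (x, y) \<in> rel M a"
  obtains k where "\<And>x. x \<in> S \<Longrightarrow> holds M x (serial_fm as k)"
    and "\<And>x a. x \<in> dom M \<Longrightarrow> holds M x (serial_fm as k) \<Longrightarrow> a \<in> set as
           \<Longrightarrow> \<exists>y. (x, y) \<in> rel M a \<and> holds M y (serial_fm as k)"
proof -
  define T where "T k = {x \<in> dom M. holds M x (serial_fm as k)}" for k
  have rel_dom: "y \<in> dom M" if "(x, y) \<in> rel M a" for x y a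
    using assms(1) that by (auto simp: is_model_def)
  have T_Suc: "T (Suc k) = {x \<in> dom M. \<forall>a\<in>set as. \<exists>y\<in>T k. (x, y) \<in> rel M a}" for k
    unfolding T_def holds_serial_fm_Suc by (auto simp del: serial_fm.simps; meson rel_dom)
  have "T (Suc k) \<subseteq> T k" for k
  proof (induction k)
    case 0
    then show ?case by (auto simp: T_def holds_def)
  next
    case (Suc k)
    then show ?case unfolding T_Suc[of "Suc k"] T_Suc[of k] by blast
  qed
  then have "antimono T"
    by (simp add: antimono_iff_le_Suc)
  have S_T: "S \<subseteq> T k" for k
  proof (induction k)
    case 0
    then show ?case using assms(3) by (auto simp: T_def holds_def)
  next
    case (Suc k)
    then show ?case unfolding T_Suc using assms(3) serial by blast
  qed
  have "finite (range T)"
    by (rule finite_subset[of _ "Pow (dom M)"]) (use assms(2) in \<open>auto simp: T_def\<close>)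
  then have "\<not> inj T"
    using finite_imageD by blast
  then obtain i j where "i < j" "T i = T j"
    by (metis injI linorder_neqE_nat)
  then have "T (Suc i) = T i"
    using antimonoD[OF \<open>antimono T\<close>, of i "Suc i"] antimonoD[OF \<open>antimono T\<close>, of "Suc i" j] by auto
  then have "\<exists>y. (x, y) \<in> rel M a \<and> holds M y (serial_fm as i)"
    if "x \<in> dom M" "holds M x (serial_fm as i)" "a \<in> set as" for x a
    using that T_Suc[of i] unfolding T_def by blast
  with S_T show ?thesis
    using that unfolding T_def by blast
qed

section \<open>Realising a finite model by an update\<close>

definition copy_rel :: "nat set \<Rightarrow> (nat \<Rightarrow> 'w) \<Rightarrow> ('w, 'a, 'p) emodel \<Rightarrow> 'a \<Rightarrow> (nat \<times> nat) set" where
  "copy_rel E dec F a = {(i, j). i \<in> E \<and> j \<in> E \<and> (dec i, dec j) \<in> rel F a}"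

definition copy_post :: "'p set \<Rightarrow> (nat \<Rightarrow> 'w) \<Rightarrow> ('w, 'a, 'p) emodel \<Rightarrow> nat \<Rightarrow> 'p \<Rightarrow> ('a, 'p) fm" where
  "copy_post P dec F f p =
     (if p \<notin> P then Atom p else if dec f \<in> val F p then top_fm else Neg top_fm)"

lemma bounded_morphism_copy:
  fixes M :: "('s, 'a, 'p) emodel" and F :: "('w, 'a, 'p) emodel"
  assumes M: "is_model M" and F: "\<forall>a. rel F a \<subseteq> dom F \<times> dom F" and dec: "dec ` E = dom F"
    and serial: "\<And>x a. x \<in> dom M \<Longrightarrow> holds M x \<chi> \<Longrightarrow> a \<in> A \<Longrightarrow> \<exists>y. (x, y) \<in> rel M a \<and> holds M y \<chi>"
  shows "bounded_morphism A P (update (lift M) E (copy_rel E dec F) (\<lambda>_. \<chi>) (copy_post P dec F)) F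
           (\<lambda>w. dec (last (snd w)))"
proof -
  let ?U = "update (lift M) E (copy_rel E dec F) (\<lambda>_. \<chi>) (copy_post P dec F)"
  have image: "dec (last (snd w)) \<in> dom F" if "w \<in> dom ?U" for w
    using that dec by (elim dom_update_liftE) auto
  have forth: "(dec (last (snd w)), dec (last (snd v))) \<in> rel F a" if wv: "(w, v) \<in> rel ?U a" for a w v
  proof -
    have "w \<in> dom ?U" "v \<in> dom ?U"
      using subsetD[OF rel_upd_subset wv] by simp_all
    then obtain x f y h where "w = (x, [f])" "v = (y, [h])"
      by (elim dom_update_liftE)
    with wv show ?thesis
      by (simp add: in_rel_upd_iff[of x "[]" f y "[]" h, simplified] copy_rel_def)
  qed
  have lift: "\<exists>v\<in>dom ?U. (w, v) \<in> rel ?U a \<and> dec (last (snd v)) = z"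
    if a: "a \<in> A" and w: "w \<in> dom ?U" and fz: "(dec (last (snd w)), z) \<in> rel F a" for a w z
  proof -
    obtain x f where x: "w = (x, [f])" "x \<in> dom M" "f \<in> E" "holds M x \<chi>"
      using w by (elim dom_update_liftE)
    from fz F obtain j where j: "j \<in> E" "dec j = z"
      using dec by (metis SigmaD2 imageE subsetD)
    from serial[OF x(2,4) a] obtain y where y: "(x, y) \<in> rel M a" "holds M y \<chi>"
      by blast
    then have "y \<in> dom M"
      using M by (auto simp: is_model_def)
    with j(1) y(2) have "(y, [j]) \<in> dom ?U"
      by (simp add: in_dom_update_lift_iff)
    moreover have "(w, (y, [j])) \<in> rel ?U a"
      using calculation w fz j y(1) x(3)
      by (simp add: x(1) in_rel_upd_iff[of x "[]" f y "[]" j, simplified] copy_rel_def in_rel_lift_iff)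
    ultimately show ?thesis
      using j(2) by auto
  qed
  have val: "w \<in> val ?U p \<longleftrightarrow> dec (last (snd w)) \<in> val F p" if p: "p \<in> P" and w: "w \<in> dom ?U" for p w
  proof -
    obtain x f where "w = (x, [f])"
      using w by (elim dom_update_liftE)
    then show ?thesis
      using p w by (simp add: in_val_upd_iff[of x "[]" f, simplified] copy_post_def)
  qed
  show ?thesis
    unfolding bounded_morphism_def using image rel_upd_subset forth lift val
    by (intro conjI ballI allI impI image_subsetI) simp_all
qed

lemma Dia_Upd_of_finite_model:
  fixes M :: "('s, 'a, 'p) emodel" and F :: "('t \<times> nat list, 'a, 'p) emodel"
  assumes M: "is_model M" "s \<in> dom M"
    and F: "finite (dom F)" "\<forall>a. rel F a \<subseteq> dom F \<times> dom F" "z \<in> dom F" "sat \<phi> F z"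
    and "wf_fm \<phi>" and "wf_fm \<chi>" and "holds M s \<chi>"
    and serial: "\<And>x a. x \<in> dom M \<Longrightarrow> holds M x \<chi> \<Longrightarrow> a \<in> agents_fm \<phi>
                   \<Longrightarrow> \<exists>y. (x, y) \<in> rel M a \<and> holds M y \<chi>"
  shows "\<exists>E Rl pre post e. wf_act (Upd E Rl pre post e) \<and> holds M s (Dia (Upd E Rl pre post e) \<phi>)"
proof -
  let ?E = "{0..<card (dom F)}"
  obtain dec where "bij_betw dec ?E (dom F)"
    using ex_bij_betw_nat_finite[OF F(1)] ..
  then have dec: "dec ` ?E = dom F"
    by (rule bij_betw_imp_surj_on)
  then obtain e where e: "e \<in> ?E" "dec e = z"
    using F(3) by (metis imageE)
  let ?Rl = "copy_rel ?E dec F" and ?pre = "\<lambda>_ :: nat. \<chi>" and ?post = "copy_post (atoms_fm \<phi>) dec F"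
  let ?U = "update (lift M) ?E ?Rl ?pre ?post"
  have "finite {p. ?post f p \<noteq> Atom p}" for f
    using finite_atoms_fm[OF \<open>wf_fm \<phi>\<close>] by (rule finite_subset[rotated]) (auto simp: copy_post_def)
  then have wf: "wf_act (Upd ?E ?Rl ?pre ?post e)"
    using e(1) \<open>wf_fm \<chi>\<close> by (auto simp: copy_rel_def copy_post_def)
  have "bounded_morphism (agents_fm \<phi>) (atoms_fm \<phi>) ?U F (\<lambda>w. dec (last (snd w)))"
    using M(1) F(2) dec serial by (intro bounded_morphism_copy) simp_all
  moreover have "(s, [e]) \<in> dom ?U"
    using M(2) e(1) \<open>holds M s \<chi>\<close> by (simp add: in_dom_update_lift_iff)
  ultimately have "sat \<phi> ?U (s, [e])"
    using sat_bounded_morphism[of _ _ ?U F, OF _ \<open>wf_fm \<phi>\<close>] F(4) e(2) by fastforce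
  then have "holds M s (Dia (Upd ?E ?Rl ?pre ?post e) \<phi>)"
    using \<open>holds M s \<chi>\<close> by (simp add: holds_def Dia_def)
  with wf show ?thesis
    by blast
qed

theorem corollary2:
  fixes M :: "('s, 'a :: finite, 'p :: countable) emodel" and s :: 's
    and N :: "('w, 'a, 'p) emodel" and t :: 'w
    and \<phi> :: "('a, 'p) fm"
  assumes "is_model M" and "finite (dom M)" and "s \<in> dom M"
    and "wf_fm \<phi>"
    and "is_model N" and "t \<in> dom N" and "holds N t \<phi>"
    and "\<exists>Sser \<subseteq> dom M. s \<in> Sser \<and>
           (\<forall>a \<in> agents_fm \<phi>. \<forall>x \<in> Sser. \<exists>u \<in> Sser. (x, u) \<in> rel M a)"
  shows "\<exists>E Rl pre post e. wf_act (Upd E Rl pre post e) \<and>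
           holds M s (Dia (Upd E Rl pre post e) \<phi>)"
proof -
  obtain S where S: "S \<subseteq> dom M" "s \<in> S" "\<forall>a \<in> agents_fm \<phi>. \<forall>x \<in> S. \<exists>u \<in> S. (x, u) \<in> rel M a"
    using assms(8) by blast
  obtain as where as: "set as = agents_fm \<phi>"
    using finite_list[of "agents_fm \<phi>"] by auto
  obtain k where k_S: "\<And>x. x \<in> S \<Longrightarrow> holds M x (serial_fm as k)"
    and k_serial: "\<And>x a. x \<in> dom M \<Longrightarrow> holds M x (serial_fm as k) \<Longrightarrow> a \<in> set as
      \<Longrightarrow> \<exists>y. (x, y) \<in> rel M a \<and> holds M y (serial_fm as k)"
    using serial_core_definable[OF assms(1,2) S(1)] S(3) as by metis
  obtain F :: "(('a, 'p) fm set \<times> nat list, 'a, 'p) emodel" and z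
    where F: "finite (dom F)" "\<forall>a. rel F a \<subseteq> dom F \<times> dom F" "z \<in> dom F" "sat \<phi> F z"
    using finite_model_property[OF assms(5,6,7,4)] .
  show ?thesis
  proof (rule Dia_Upd_of_finite_model[OF assms(1,3) F assms(4) wf_serial_fm])
    show "holds M s (serial_fm as k)"
      using k_S S(2) .
    show "\<exists>y. (x, y) \<in> rel M a \<and> holds M y (serial_fm as k)"
      if "x \<in> dom M" "holds M x (serial_fm as k)" "a \<in> agents_fm \<phi>" for x a
      using k_serial that as by blast
  qed
qed

end
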